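(* Let $R_e\approx1.4877$ be the unique positive root of $\frac{10}{7(R+1)}-\frac{R^2\sqrt{R}}{R^2+R+1}=0$. Let $\tau_k>0$ be time-step sizes with ratios $r_k=\tau_k/\tau_{k-1}$ satisfying $0<r_k<R_e$ for all $k\ge2$. Then for every $n\ge3$ and all real numbers $\xi_3,\dots,\xi_n$, $$2\sum_{k=3}^n\xi_k\sum_{j=3}^k\tau_kd^{(k)}_{k-j}\xi_j\ge\frac{1}{50}\sum_{k=3}^n\tau_k\xi_k^2 .$$
   Context: For $x,y\ge0$ let $d_0(x,y)=\frac{1+2x}{1+x}+\frac{xy}{1+y+xy}$, $d_1(x,y)=-\frac{x}{1+x}-\frac{xy}{1+y+xy}-\frac{xy^2}{1+y+xy}\frac{1+x}{1+y}$, $d_2(x,y)=\frac{xy^2}{1+y+xy}\frac{1+x}{1+y}$. The BDF3 kernels are $d^{(k)}_j=d_j(r_k,r_{k-1})$ for $j=0,1,2$ and $d^{(k)}_j=0$ for $j\ge3$. *)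

theory Defs
  imports Complex_Main
begin

definition d0 :: "real \<Rightarrow> real \<Rightarrow> real" where
  "d0 x y = (1 + 2*x) / (1 + x) + x*y / (1 + y + x*y)"

definition d1 :: "real \<Rightarrow> real \<Rightarrow> real" where
  "d1 x y = - x / (1 + x) - x*y / (1 + y + x*y) - (x*y^2 / (1 + y + x*y)) * ((1 + x) / (1 + y))"

definition d2 :: "real \<Rightarrow> real \<Rightarrow> real" where
  "d2 x y = (x*y^2 / (1 + y + x*y)) * ((1 + x) / (1 + y))"

definition ratio :: "(nat \<Rightarrow> real) \<Rightarrow> nat \<Rightarrow> real" where
  "ratio \<tau> k = \<tau> k / \<tau> (k - 1)"

definition bdf3_kernel :: "(nat \<Rightarrow> real) \<Rightarrow> nat \<Rightarrow> nat \<Rightarrow> real" where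
  "bdf3_kernel \<tau> k j =
     (if j = 0 then d0 (ratio \<tau> k) (ratio \<tau> (k - 1))
      else if j = 1 then d1 (ratio \<tau> k) (ratio \<tau> (k - 1))
      else if j = 2 then d2 (ratio \<tau> k) (ratio \<tau> (k - 1))
      else 0)"

definition R_e :: real where
  "R_e = (THE R. R > 0 \<and> 10 / (7 * (R + 1)) - R^2 * sqrt R / (R^2 + R + 1) = 0)"

end

theory Submission
  imports Defs
begin

(* With the discrete energy
     E_k = tau_k (11/6 xi_k^2 - 7/6 xi_k xi_(k-1)) + 5/7 tau_(k-1) xi_(k-1)^2,
   the k-th summand 2 tau_k xi_k (d0 xi_k + d1 xi_(k-1) + d2 xi_(k-2)) - tau_k xi_k^2 / 50 equals
   E_k - E_(k-1) + tau_(k-1) Q, where Q is a quadratic form in (xi_k, xi_(k-1), xi_(k-2)) whose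
   coefficients depend only on r_k and r_(k-1). Since R_e < 3/2, Q is positive semidefinite for all
   admissible ratios: after clearing denominators, the Schur complement of its last diagonal entry
   reduces this to the nonnegativity of one polynomial on [0,3/2]^2, which its Bernstein expansion
   certifies. Summing over k, and extending xi by zero below index 3 so that E_2 = 0, the difference
   of the two sides is at least E_n, and E_n >= 0 because r_n <= 3/2. *)

definition R_e_equation :: "real \<Rightarrow> real" where
  "R_e_equation R = 10 / (7 * (R + 1)) - R^2 * sqrt R / (R^2 + R + 1)"

lemma R_e_equation_strict_antimono:
  assumes "0 < a" "a < b"
  shows "R_e_equation b < R_e_equation a"
proof -
  have "10 / (7 * (b + 1)) < 10 / (7 * (a + 1))"
    using assms by (simp add: field_simps)
  moreover have "a^2 / (a^2 + a + 1) < b^2 / (b^2 + b + 1)"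
  proof -
    have "b^2 * (a^2 + a + 1) - a^2 * (b^2 + b + 1) = (b - a) * (a * b + a + b)"
      by algebra
    moreover have "(b - a) * (a * b + a + b) > 0"
      using assms by (simp add: add_pos_pos)
    ultimately have "a^2 * (b^2 + b + 1) < b^2 * (a^2 + a + 1)"
      by linarith
    then show ?thesis
      using assms by (simp add: divide_simps add_pos_pos)
  qed
  then have "a^2 / (a^2 + a + 1) * sqrt a < b^2 / (b^2 + b + 1) * sqrt b"
    using assms by (intro mult_strict_mono) (auto simp: add_pos_pos)
  ultimately show ?thesis
    unfolding R_e_equation_def by (simp add: field_simps)
qed

lemma R_e_equation_three_halves: "R_e_equation (3/2) < 0"
proof -
  have "121/100 < sqrt (3/2 :: real)"
    by (rule real_less_rsqrt) (simp add: power2_eq_square)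
  then show ?thesis
    by (simp add: R_e_equation_def power2_eq_square)
qed

lemma R_e_equation_root: "\<exists>r \<in> {1..3/2}. R_e_equation r = 0"
proof -
  have "x^2 + x + 1 \<noteq> 0" if "0 \<le> x" for x :: real
    using that zero_le_power2[of x] by linarith
  then have "continuous_on {1..3/2} R_e_equation"
    unfolding R_e_equation_def by (intro continuous_intros) auto
  moreover have "R_e_equation 1 > 0"
    by (simp add: R_e_equation_def)
  ultimately show ?thesis
    using R_e_equation_three_halves IVT2'[of R_e_equation "3/2" 0 1] by force
qed

lemma R_e_equation_unique_root:
  assumes "0 < r" "R_e_equation r = 0" "0 < s" "R_e_equation s = 0"
  shows "r = s"
  using R_e_equation_strict_antimono[of r s] R_e_equation_strict_antimono[of s r] assms
  by (cases r s rule: linorder_cases) auto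

lemma R_e_root: "R_e > 0" "R_e_equation R_e = 0"
proof -
  obtain r where "r \<in> {1..3/2}" "R_e_equation r = 0"
    using R_e_equation_root by blast
  then have "\<exists>!R. R > 0 \<and> R_e_equation R = 0"
    using R_e_equation_unique_root by (intro ex1I[of _ r]) auto
  then have "R_e > 0 \<and> R_e_equation R_e = 0"
    unfolding R_e_def R_e_equation_def[symmetric] by (rule theI')
  then show "R_e > 0" "R_e_equation R_e = 0" by auto
qed

lemma R_e_less_three_halves: "R_e < 3/2"
proof -
  obtain r where r: "r \<in> {1..3/2}" "R_e_equation r = 0"
    using R_e_equation_root by blast
  then have "r = R_e"
    using R_e_root R_e_equation_unique_root by auto
  moreover have "r \<noteq> 3/2"
    using r(2) R_e_equation_three_halves by force
  ultimately show ?thesis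
    using r(1) by auto
qed

lemma quadratic_form2_nonneg:
  fixes a b c u v :: real
  assumes "0 < c" "b^2 \<le> a * c"
  shows "0 \<le> a * u^2 + 2 * b * u * v + c * v^2"
proof -
  have "c * (a * u^2 + 2 * b * u * v + c * v^2) = (c * v + b * u)^2 + (a * c - b^2) * u^2"
    by algebra
  also have "\<dots> \<ge> 0"
    using assms by simp
  finally show ?thesis
    using assms(1) by (simp add: zero_le_mult_iff)
qed

lemma quadratic_form3_nonneg:
  fixes a b c d e f u v w :: real
  assumes "0 < c" "0 < e * c - f^2" "(b * c - d * f)^2 \<le> (a * c - d^2) * (e * c - f^2)"
  shows "0 \<le> a * u^2 + 2 * b * u * v + 2 * d * u * w + e * v^2 + 2 * f * v * w + c * w^2"
proof -
  have "c * (a * u^2 + 2 * b * u * v + 2 * d * u * w + e * v^2 + 2 * f * v * w + c * w^2)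
      = (c * w + d * u + f * v)^2
        + ((a * c - d^2) * u^2 + 2 * (b * c - d * f) * u * v + (e * c - f^2) * v^2)"
    by algebra
  also have "\<dots> \<ge> 0"
    using quadratic_form2_nonneg[OF assms(2), of "b * c - d * f" "a * c - d^2" u v] assms(3)
    by (simp add: mult.commute)
  finally show ?thesis
    using assms(1) by (simp add: zero_le_mult_iff)
qed

(* The form Q: x, y stand for r_k, r_(k-1) and u, v, w for xi_k, xi_(k-1), xi_(k-2). *)
definition bdf3_step_form :: "real \<Rightarrow> real \<Rightarrow> real \<Rightarrow> real \<Rightarrow> real \<Rightarrow> real" where
  "bdf3_step_form x y u v w =
     x * (2 * d0 x y - 1/50 - 11/6) * u^2 + 2 * x * (d1 x y + 7/12) * u * v + 2 * x * d2 x y * u * w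
     + 47/42 * v^2 - 7/6 * v * w + 5 / (7 * y) * w^2"

definition bdf3_denom :: "real \<Rightarrow> real \<Rightarrow> real" where
  "bdf3_denom x y = (1 + x) * (1 + y) * (1 + y + x * y)"

definition step_coeff_uu :: "real \<Rightarrow> real \<Rightarrow> real" where
  "step_coeff_uu x y = 11/75 + 11/75*y + 161/75*x + 322/75*x*y + 311/75*x^2*y"

definition step_coeff_uv :: "real \<Rightarrow> real \<Rightarrow> real" where
  "step_coeff_uv x y = 7/12 + 7/6*y + 7/12*y^2 - 5/12*x - 5/4*x*y - 11/6*x*y^2 - 17/12*x^2*y
     - 41/12*x^2*y^2 - x^3*y^2"

lemma bdf3_denominators_nonzero:
  fixes x y :: real
  assumes "0 \<le> x" "0 \<le> y"
  shows "1 + x \<noteq> 0" "1 + y \<noteq> 0" "1 + y + x * y \<noteq> 0"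
proof -
  have "0 \<le> x * y"
    using assms by simp
  then show "1 + x \<noteq> 0" "1 + y \<noteq> 0" "1 + y + x * y \<noteq> 0"
    using assms by linarith+
qed

lemma d0_cleared:
  assumes "0 \<le> x" "0 \<le> y"
  shows "(1 + x) * (1 + y + x * y) * d0 x y = (1 + 2 * x) * (1 + y + x * y) + x * y * (1 + x)"
proof -
  define A D where "A = 1 + x" and "D = 1 + y + x * y"
  have "A \<noteq> 0" "D \<noteq> 0"
    using bdf3_denominators_nonzero[OF assms] by (simp_all add: A_def D_def)
  then show ?thesis
    unfolding d0_def D_def[symmetric] unfolding A_def[symmetric] by (simp add: field_simps)
qed

lemma d2_cleared:
  assumes "0 \<le> x" "0 \<le> y"
  shows "(1 + y) * (1 + y + x * y) * d2 x y = x * y^2 * (1 + x)"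
proof -
  define B D where "B = 1 + y" and "D = 1 + y + x * y"
  have "B \<noteq> 0" "D \<noteq> 0"
    using bdf3_denominators_nonzero[OF assms] by (simp_all add: B_def D_def)
  then show ?thesis
    unfolding d2_def D_def[symmetric] unfolding B_def[symmetric] by (simp add: field_simps)
qed

lemma d1_cleared:
  assumes "0 \<le> x" "0 \<le> y"
  shows "bdf3_denom x y * d1 x y
    = - x * (1 + y) * (1 + y + x * y) - x * y * (1 + x) * (1 + y) - x * y^2 * (1 + x)^2"
proof -
  define A B D where "A = 1 + x" and "B = 1 + y" and "D = 1 + y + x * y"
  have nonzero: "A \<noteq> 0" "D \<noteq> 0"
    using bdf3_denominators_nonzero[OF assms] by (simp_all add: A_def D_def)
  have "d1 x y = - x / A - x * y / D - d2 x y"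
    by (simp add: d1_def d2_def A_def D_def)
  then have "A * B * D * d1 x y = A * B * D * (- x / A - x * y / D) - A * (B * D * d2 x y)"
    by (simp only: right_diff_distrib mult.assoc)
  also have "\<dots> = - x * B * D - x * y * A * B - x * y^2 * A^2"
    using nonzero d2_cleared[OF assms]
    unfolding D_def[symmetric] unfolding A_def[symmetric] B_def[symmetric]
    by (simp add: field_simps power2_eq_square)
  finally show ?thesis
    by (simp add: bdf3_denom_def A_def B_def D_def)
qed

lemma bdf3_step_form_cleared:
  assumes "0 \<le> x" "0 < y"
  shows "y * bdf3_denom x y * bdf3_step_form x y u v w =
     x * y * (1 + y) * step_coeff_uu x y * u^2 + 2 * (x * y * step_coeff_uv x y) * u * v
     + 2 * (x^2 * y^3 * (1 + x)^2) * u * w + 47/42 * y * bdf3_denom x y * v^2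
     + 2 * (- 7/12 * y * bdf3_denom x y) * v * w + 5/7 * bdf3_denom x y * w^2"
proof -
  have "0 \<le> y"
    using assms(2) by simp
  have "y * bdf3_denom x y * bdf3_step_form x y u v w =
     x * y * (1 + y)
       * (2 * ((1 + x) * (1 + y + x * y) * d0 x y) - (1/50 + 11/6) * (1 + x) * (1 + y + x * y)) * u^2
     + 2 * x * y * (bdf3_denom x y * d1 x y + 7/12 * bdf3_denom x y) * u * v
     + 2 * x * y * (1 + x) * ((1 + y) * (1 + y + x * y) * d2 x y) * u * w
     + 47/42 * y * bdf3_denom x y * v^2 - 7/6 * y * bdf3_denom x y * v * w + 5/7 * bdf3_denom x y * w^2"
    using assms by (simp add: bdf3_step_form_def bdf3_denom_def field_simps)
  also have "\<dots> = x * y * (1 + y) * step_coeff_uu x y * u^2 + 2 * (x * y * step_coeff_uv x y) * u * v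
     + 2 * (x^2 * y^3 * (1 + x)^2) * u * w + 47/42 * y * bdf3_denom x y * v^2
     + 2 * (- 7/12 * y * bdf3_denom x y) * v * w + 5/7 * bdf3_denom x y * w^2"
    unfolding d0_cleared[OF assms(1) \<open>0 \<le> y\<close>] d1_cleared[OF assms(1) \<open>0 \<le> y\<close>]
      d2_cleared[OF assms(1) \<open>0 \<le> y\<close>]
    unfolding step_coeff_uu_def step_coeff_uv_def bdf3_denom_def by algebra
  finally show ?thesis .
qed

(* Entries of the Schur complement of the w^2 coefficient of the polynomial form in
   bdf3_step_form_cleared, with the positive factors x y, x y bdf3_denom x y and
   y (bdf3_denom x y)^2 removed. *)
definition step_schur_uu :: "real \<Rightarrow> real \<Rightarrow> real" where
  "step_schur_uu x y = 5/7 * bdf3_denom x y * (1 + y) * step_coeff_uu x y - x^3 * y^5 * (1 + x)^4"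

definition step_schur_uv :: "real \<Rightarrow> real \<Rightarrow> real" where
  "step_schur_uv x y = 5/7 * step_coeff_uv x y + 7/12 * x * y^3 * (1 + x)^2"

definition step_schur_vv :: "real \<Rightarrow> real" where
  "step_schur_vv y = 235/294 - 49/144 * y"

(* Bernstein expansion on [0,3/2]^2: all coefficients are positive. *)
lemma step_schur_det_nonneg:
  fixes x y :: real
  assumes "0 \<le> x" "x \<le> 3/2" "0 \<le> y" "y \<le> 3/2"
  shows "0 \<le> step_schur_uu x y * step_schur_vv y - x * (step_schur_uv x y)^2"
proof -
  have "step_schur_uu x y * step_schur_vv y - x * (step_schur_uv x y)^2 =
    ( (3/2 - x)^7 * (1058816/1640558367 * (3/2 - y)^5
        + 54854272/8202791835 * y * (3/2 - y)^4
        + 14510848/546852789 * y^2 * (3/2 - y)^3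
        + 80527040/1640558367 * y^3 * (3/2 - y)^2
        + 65278400/1640558367 * y^4 * (3/2 - y)
        + 1661000/182284263 * y^5)
    + x * (3/2 - x)^6 * (28952960/1640558367 * (3/2 - y)^5
        + 335142656/1640558367 * y * (3/2 - y)^4
        + 2437004608/2734263945 * y^2 * (3/2 - y)^3
        + 2922571136/1640558367 * y^3 * (3/2 - y)^2
        + 355442120/234365481 * y^4 * (3/2 - y)
        + 179004400/546852789 * y^5)
    + x^2 * (3/2 - x)^5 * (64469120/546852789 * (3/2 - y)^5
        + 813056864/546852789 * y * (3/2 - y)^4
        + 6377238944/911421315 * y^2 * (3/2 - y)^3
        + 40953532024/2734263945 * y^3 * (3/2 - y)^2
        + 1062003272/78121827 * y^4 * (3/2 - y)
        + 190615120/60761421 * y^5)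
    + x^3 * (3/2 - x)^4 * (566020960/1640558367 * (3/2 - y)^5
        + 7783755136/1640558367 * y * (3/2 - y)^4
        + 65644612888/2734263945 * y^2 * (3/2 - y)^3
        + 448030660496/8202791835 * y^3 * (3/2 - y)^2
        + 85519136056/1640558367 * y^4 * (3/2 - y)
        + 326613800/26040609 * y^5)
    + x^4 * (3/2 - x)^3 * (872010880/1640558367 * (3/2 - y)^5
        + 13004353840/1640558367 * y * (3/2 - y)^4
        + 117005149952/2734263945 * y^2 * (3/2 - y)^3
        + 837271913306/8202791835 * y^3 * (3/2 - y)^2
        + 164338322356/1640558367 * y^4 * (3/2 - y)
        + 26745021655/1093705578 * y^5)
    + x^5 * (3/2 - x)^2 * (247307072/546852789 * (3/2 - y)^5
        + 19842474544/2734263945 * y * (3/2 - y)^4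
        + 37637243006/911421315 * y^2 * (3/2 - y)^3
        + 275765772304/2734263945 * y^3 * (3/2 - y)^2
        + 106718587963/1093705578 * y^4 * (3/2 - y)
        + 1430713070/60761421 * y^5)
    + x^6 * (3/2 - x) * (331162880/1640558367 * (3/2 - y)^5
        + 5671135472/1640558367 * y * (3/2 - y)^4
        + 11168404708/546852789 * y^2 * (3/2 - y)^3
        + 80388765542/1640558367 * y^3 * (3/2 - y)^2
        + 138183957745/3281116734 * y^4 * (3/2 - y)
        + 2318964275/243045684 * y^5)
    + x^7 * (60744800/1640558367 * (3/2 - y)^5
        + 1101248240/1640558367 * y * (3/2 - y)^4
        + 2211619610/546852789 * y^2 * (3/2 - y)^3
        + 14507627840/1640558367 * y^3 * (3/2 - y)^2
        + 7154522450/1640558367 * y^4 * (3/2 - y)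
        + 130847875/312487308 * y^5))"
    unfolding step_schur_uu_def step_schur_uv_def step_schur_vv_def step_coeff_uu_def
      step_coeff_uv_def bdf3_denom_def
    by algebra
  also have "\<dots> \<ge> 0"
    using assms by (intro add_nonneg_nonneg mult_nonneg_nonneg zero_le_power) auto
  finally show ?thesis .
qed

lemma bdf3_step_form_nonneg:
  assumes "0 < x" "x \<le> 3/2" "0 < y" "y \<le> 3/2"
  shows "0 \<le> bdf3_step_form x y u v w"
proof -
  have denom_pos: "bdf3_denom x y > 0"
    using assms by (simp add: bdf3_denom_def add_pos_pos)
  let ?A = "x * y * (1 + y) * step_coeff_uu x y" and ?B = "x * y * step_coeff_uv x y"
    and ?D = "x^2 * y^3 * (1 + x)^2" and ?E = "47/42 * y * bdf3_denom x y"
    and ?F = "- 7/12 * y * bdf3_denom x y" and ?C = "5/7 * bdf3_denom x y"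
  have "0 \<le> ?A * u^2 + 2 * ?B * u * v + 2 * ?D * u * w + ?E * v^2 + 2 * ?F * v * w + ?C * w^2"
  proof (rule quadratic_form3_nonneg)
    show "0 < ?C"
      using denom_pos by simp
    have schur_vv: "?E * ?C - ?F^2 = y * (bdf3_denom x y)^2 * step_schur_vv y"
      unfolding step_schur_vv_def by algebra
    then show "0 < ?E * ?C - ?F^2"
      using assms denom_pos by (simp add: step_schur_vv_def)
    have "?A * ?C - ?D^2 = x * y * step_schur_uu x y"
      unfolding step_schur_uu_def by algebra
    moreover have "?B * ?C - ?D * ?F = x * y * bdf3_denom x y * step_schur_uv x y"
      unfolding step_schur_uv_def by algebra
    moreover have "0 \<le> x * y^2 * (bdf3_denom x y)^2
        * (step_schur_uu x y * step_schur_vv y - x * (step_schur_uv x y)^2)"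
      using assms step_schur_det_nonneg[of x y] by simp
    ultimately show "(?B * ?C - ?D * ?F)^2 \<le> (?A * ?C - ?D^2) * (?E * ?C - ?F^2)"
      unfolding schur_vv by (simp add: algebra_simps power2_eq_square)
  qed
  then have "0 \<le> y * bdf3_denom x y * bdf3_step_form x y u v w"
    using bdf3_step_form_cleared[of x y u v w] assms by (simp add: algebra_simps)
  then show ?thesis
    using mult_pos_pos[OF assms(3) denom_pos] by (simp add: zero_le_mult_iff)
qed

definition bdf3_conv :: "(nat \<Rightarrow> real) \<Rightarrow> (nat \<Rightarrow> real) \<Rightarrow> nat \<Rightarrow> real" where
  "bdf3_conv \<tau> \<xi> k =
     d0 (ratio \<tau> k) (ratio \<tau> (k - 1)) * \<xi> k + d1 (ratio \<tau> k) (ratio \<tau> (k - 1)) * \<xi> (k - 1)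
     + d2 (ratio \<tau> k) (ratio \<tau> (k - 1)) * \<xi> (k - 2)"

lemma bdf3_kernel_sum:
  assumes "3 \<le> k" "\<And>j. j < 3 \<Longrightarrow> \<xi> j = 0"
  shows "(\<Sum>j = 3..k. bdf3_kernel \<tau> k (k - j) * \<xi> j) = bdf3_conv \<tau> \<xi> k"
proof -
  have "(\<Sum>j = 3..k. bdf3_kernel \<tau> k (k - j) * \<xi> j) = (\<Sum>j = 0..k. bdf3_kernel \<tau> k (k - j) * \<xi> j)"
    using assms by (intro sum.mono_neutral_left) auto
  also have "\<dots> = (\<Sum>i = 0..k. bdf3_kernel \<tau> k i * \<xi> (k - i))"
    by (subst sum.atLeastAtMost_rev) simp
  also have "\<dots> = (\<Sum>i = 0..2. bdf3_kernel \<tau> k i * \<xi> (k - i))"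
    using assms by (intro sum.mono_neutral_right) (auto simp: bdf3_kernel_def)
  also have "\<dots> = bdf3_conv \<tau> \<xi> k"
    by (simp add: bdf3_kernel_def bdf3_conv_def numeral_eq_Suc)
  finally show ?thesis .
qed

definition bdf3_energy :: "(nat \<Rightarrow> real) \<Rightarrow> (nat \<Rightarrow> real) \<Rightarrow> nat \<Rightarrow> real" where
  "bdf3_energy \<tau> \<xi> k =
     \<tau> k * (11/6 * (\<xi> k)^2 - 7/6 * \<xi> k * \<xi> (k - 1)) + 5/7 * \<tau> (k - 1) * (\<xi> (k - 1))^2"

lemma bdf3_energy_nonneg:
  assumes "0 < \<tau> (k - 1)" "0 < \<tau> k" "ratio \<tau> k \<le> 3/2"
  shows "0 \<le> bdf3_energy \<tau> \<xi> k"
proof -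
  have "\<tau> k \<le> 3/2 * \<tau> (k - 1)"
    using assms by (simp add: ratio_def divide_simps)
  then have "(- 7/12 * \<tau> k)^2 \<le> (11/6 * \<tau> k) * (5/7 * \<tau> (k - 1))"
    using assms by (simp add: power2_eq_square field_simps)
  then show ?thesis
    using quadratic_form2_nonneg[of "5/7 * \<tau> (k - 1)" "- 7/12 * \<tau> k" "11/6 * \<tau> k" "\<xi> k" "\<xi> (k - 1)"]
      assms by (simp add: bdf3_energy_def algebra_simps)
qed

lemma bdf3_energy_increment:
  assumes "\<tau> m \<noteq> 0" "\<tau> (m - 1) \<noteq> 0"
  shows "2 * (\<xi> (Suc m) * (\<tau> (Suc m) * bdf3_conv \<tau> \<xi> (Suc m))) - 1/50 * \<tau> (Suc m) * (\<xi> (Suc m))^2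
    = bdf3_energy \<tau> \<xi> (Suc m) - bdf3_energy \<tau> \<xi> m
      + \<tau> m * bdf3_step_form (ratio \<tau> (Suc m)) (ratio \<tau> m) (\<xi> (Suc m)) (\<xi> m) (\<xi> (m - 1))"
proof -
  define x y where "x = ratio \<tau> (Suc m)" and "y = ratio \<tau> m"
  have "\<tau> (Suc m) = x * \<tau> m" "\<tau> (m - 1) = \<tau> m / y" "y \<noteq> 0"
    using assms by (simp_all add: x_def y_def ratio_def)
  moreover have "Suc m - 2 = m - 1"
    by simp
  ultimately show ?thesis
    unfolding bdf3_conv_def bdf3_energy_def bdf3_step_form_def diff_Suc_1 \<open>Suc m - 2 = m - 1\<close>
    unfolding x_def[symmetric] y_def[symmetric]
    by (simp add: field_simps power2_eq_square)
qed

lemma bdf3_energy_le_sum: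
  assumes "\<And>k. 1 \<le> k \<Longrightarrow> 0 < \<tau> k" "\<And>k. 2 \<le> k \<Longrightarrow> ratio \<tau> k \<le> 3/2" "2 \<le> n"
  shows "bdf3_energy \<tau> \<xi> n - bdf3_energy \<tau> \<xi> 2
    \<le> 2 * (\<Sum>k = 3..n. \<xi> k * (\<tau> k * bdf3_conv \<tau> \<xi> k)) - 1/50 * (\<Sum>k = 3..n. \<tau> k * (\<xi> k)^2)"
  using \<open>2 \<le> n\<close>
proof (induction n rule: nat_induct_at_least)
  case base
  then show ?case by simp
next
  case (Suc m)
  have ratio_pos: "0 < ratio \<tau> k" if "2 \<le> k" for k
    using assms(1)[of k] assms(1)[of "k - 1"] that by (simp add: ratio_def)
  have "0 < \<tau> m" "0 < \<tau> (m - 1)"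
    using Suc.hyps assms(1) by auto
  moreover have "0 \<le> bdf3_step_form (ratio \<tau> (Suc m)) (ratio \<tau> m) (\<xi> (Suc m)) (\<xi> m) (\<xi> (m - 1))"
    using Suc.hyps assms(2) ratio_pos by (intro bdf3_step_form_nonneg) auto
  ultimately have "0 \<le> \<tau> m * bdf3_step_form (ratio \<tau> (Suc m)) (ratio \<tau> m) (\<xi> (Suc m)) (\<xi> m) (\<xi> (m - 1))"
    by simp
  then show ?case
    using Suc.IH Suc.hyps bdf3_energy_increment[of \<tau> m \<xi>] \<open>0 < \<tau> m\<close> \<open>0 < \<tau> (m - 1)\<close>
    by (simp add: add_divide_distrib)
qed

theorem lemma3p2:
  fixes \<tau> \<xi> :: "nat \<Rightarrow> real" and n :: nat
  assumes tau_pos: "\<And>k. k \<ge> 1 \<Longrightarrow> \<tau> k > 0"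
    and ratio_bound: "\<And>k. k \<ge> 2 \<Longrightarrow> 0 < ratio \<tau> k \<and> ratio \<tau> k < R_e"
    and n: "n \<ge> 3"
  shows "2 * (\<Sum>k = 3..n. \<xi> k * (\<Sum>j = 3..k. \<tau> k * bdf3_kernel \<tau> k (k - j) * \<xi> j))
           \<ge> (1/50) * (\<Sum>k = 3..n. \<tau> k * (\<xi> k)^2)"
proof -
  define \<zeta> where "\<zeta> j = (if 3 \<le> j then \<xi> j else 0)" for j
  have ratio_le: "ratio \<tau> k \<le> 3/2" if "2 \<le> k" for k
    using ratio_bound[OF that] R_e_less_three_halves by linarith
  have "\<xi> k * (\<Sum>j = 3..k. \<tau> k * bdf3_kernel \<tau> k (k - j) * \<xi> j) = \<zeta> k * (\<tau> k * bdf3_conv \<tau> \<zeta> k)"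
    if "k \<in> {3..n}" for k
    using that bdf3_kernel_sum[of k \<zeta> \<tau>] by (simp add: \<zeta>_def sum_distrib_left[symmetric] mult.assoc)
  then have "(\<Sum>k = 3..n. \<xi> k * (\<Sum>j = 3..k. \<tau> k * bdf3_kernel \<tau> k (k - j) * \<xi> j))
      = (\<Sum>k = 3..n. \<zeta> k * (\<tau> k * bdf3_conv \<tau> \<zeta> k))"
    by (rule sum.cong[OF refl])
  moreover have "(\<Sum>k = 3..n. \<tau> k * (\<xi> k)^2) = (\<Sum>k = 3..n. \<tau> k * (\<zeta> k)^2)"
    by (intro sum.cong) (simp_all add: \<zeta>_def)
  moreover have "bdf3_energy \<tau> \<zeta> 2 = 0"
    by (simp add: bdf3_energy_def \<zeta>_def)
  ultimately show ?thesis
    using bdf3_energy_le_sum[of \<tau> n \<zeta>] bdf3_energy_nonneg[of \<tau> n \<zeta>] tau_pos ratio_le n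
    by simp
qed

end
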